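(* One has: (1) If the conditions (1.2) $(\Gamma, T\rhd_{C})\Rightarrow (\Gamma\rhd_{C})$, and (4a) $(\Gamma_1\vdash T=T')\wedge(\Gamma_1,T,\Gamma_2\vdash S=S')\Rightarrow(\Gamma_1,T',\Gamma_2\vdash S=S')$ hold, then $(\Gamma\vdash S=S')\wedge(\Gamma\sim\Gamma')\Rightarrow (\Gamma'\vdash S=S')$. (2) If conditions (1.2), (4a) above as well as (1.3) $(\Gamma\vdash_{\widetilde{C}} r:R)\Rightarrow (\Gamma,R\rhd_{C})$, (4b) $(\Gamma_1\vdash T=T')\wedge(\Gamma_1,T,\Gamma_2\vdash o=o':S)\Rightarrow(\Gamma_1,T',\Gamma_2\vdash o=o':S)$, (4c) $(\Gamma\vdash S=S')\wedge(\Gamma\vdash o=o':S)\Rightarrow(\Gamma\vdash o=o':S')$ hold, then $(\Gamma\vdash o=o':S)\wedge((\Gamma,S)\sim(\Gamma',S'))\Rightarrow (\Gamma'\vdash o=o':S')$.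
   Context: Let $R$ be a monad on $Sets$ and $LM$ a left $R$-module with values in $Sets$. Let $C\subset \coprod_{n\ge 0}\prod_{i=0}^{n-1} LM(\{1,\dots,i\})$, $\widetilde{C}\subset \coprod_{n\ge 0}(\prod_{i=0}^{n} LM(\{1,\dots,i\}))\times R(\{1,\dots,n\})$, $Ceq\subset \coprod_{n\ge 0}(\prod_{i=0}^{n-1} LM(\{1,\dots,i\}))\times LM(\{1,\dots,n\})^2$ and $\widetilde{Ceq}\subset \coprod_{n\ge 0}(\prod_{i=0}^{n} LM(\{1,\dots,i\}))\times R(\{1,\dots,n\})^2$ be subsets. For $\Gamma=(T_1,\dots,T_n)$ write $(\Gamma\rhd_C)$ if $\Gamma\in C$; $(\Gamma\vdash_{\widetilde C} t:T)$ if $(T_1,\dots,T_n,T,t)\in\widetilde C$; $(\Gamma\vdash S_1=S_2)$ if $(T_1,\dots,T_n,S_1,S_2)\in Ceq$; and $(\Gamma\vdash o=o':S)$ if $(T_1,\dots,T_n,S,o,o')\in\widetilde{Ceq}$. Here $l(\Gamma)$ is the length of $\Gamma$ and $ft(T_1,\dots,T_n)=(T_1,\dots,T_{n-1})$. The relation $\sim$ on $C$ is defined recursively: for $\Gamma=(T_1,\dots,T_n)$, $\Gamma'=(T_1',\dots,T_n')$ in $C$, $\Gamma\sim\Gamma'$ iff $ft(\Gamma)\sim ft(\Gamma')$ and $(T_1,\dots,T_{n-1}\vdash T_n=T_n')$ (contexts of length $0$ are related). In the claim, $\Gamma,\Gamma'$ have equal length, and $\Gamma_1,\Gamma_2$ denote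 arbitrary (possibly empty) sequences. *)

theory Defs
  imports Main
begin

text \<open>Contexts (T_1,...,T_n) are lists; LM i stands for LM({1..i}) and R n for R({1..n}),
both viewed as subsets of ambient types 'l and 'r.\<close>

definition well_typed :: "(nat \<Rightarrow> 'l set) \<Rightarrow> 'l list \<Rightarrow> bool" where
  "well_typed LM G \<longleftrightarrow> (\<forall>i<length G. G ! i \<in> LM i)"

inductive ctx_sim :: "'l list set \<Rightarrow> ('l list \<times> 'l \<times> 'l) set \<Rightarrow> 'l list \<Rightarrow> 'l list \<Rightarrow> bool"
  for C Ceq where
  nil: "[] \<in> C \<Longrightarrow> ctx_sim C Ceq [] []"
| snoc: "ctx_sim C Ceq G G' \<Longrightarrow> G @ [T] \<in> C \<Longrightarrow> G' @ [T'] \<in> C \<Longrightarrow> (G, T, T') \<in> Ceq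
         \<Longrightarrow> ctx_sim C Ceq (G @ [T]) (G' @ [T'])"

end

theory Submission
  imports Defs
begin

text \<open>If \<open>\<Gamma> \<sim> \<Gamma>'\<close>, then \<open>\<Gamma>'\<close> arises from \<open>\<Gamma>\<close> by replacing its entries one at a time,
  from the last to the first, by judgmentally equal ones; any judgment stable under a single
  such replacement in its context (conditions (4a), (4b)) is therefore transported along \<open>\<sim>\<close>.
  For term equalities the type \<open>S\<close> itself must also be changed to \<open>S'\<close>, which is what
  (4c) provides.\<close>

lemma ctx_sim_transport:
  assumes "ctx_sim C Ceq G G'"
    and replace: "\<And>G1 T T' G2 x. (G1, T, T') \<in> Ceq \<Longrightarrow> P (G1 @ [T] @ G2) x \<Longrightarrow> P (G1 @ [T'] @ G2) x"
    and "P (G @ G2) x"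
  shows "P (G' @ G2) x"
  using assms(1,3)
proof (induction arbitrary: G2 rule: ctx_sim.induct)
  case nil
  then show ?case by simp
next
  case (snoc G G' T T')
  have "P (G @ [T] @ G2) x" using snoc.prems by simp
  with \<open>(G, T, T') \<in> Ceq\<close> have "P (G @ [T'] @ G2) x" by (rule replace)
  then show ?case using snoc.IH[of "[T'] @ G2"] by simp
qed

lemma ctx_sim_snocD:
  assumes "ctx_sim C Ceq (G @ [S]) (G' @ [S'])"
  shows "ctx_sim C Ceq G G'" and "(G, S, S') \<in> Ceq"
  using assms by (cases rule: ctx_sim.cases; auto)+

lemma type_eq_ctx_sim:
  assumes replace: "\<And>G1 T T' G2 S S'. (G1, T, T') \<in> Ceq \<Longrightarrow> (G1 @ [T] @ G2, S, S') \<in> Ceq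
                      \<Longrightarrow> (G1 @ [T'] @ G2, S, S') \<in> Ceq"
    and "(G, S, S') \<in> Ceq" and "ctx_sim C Ceq G G'"
  shows "(G', S, S') \<in> Ceq"
  using ctx_sim_transport[OF assms(3), of "\<lambda>G x. (G, x) \<in> Ceq" "[]" "(S, S')"] replace assms(2)
  by auto

lemma term_eq_ctx_sim:
  assumes replace: "\<And>G1 T T' G2 S u u'. (G1, T, T') \<in> Ceq \<Longrightarrow> (G1 @ [T] @ G2, S, u, u') \<in> Ceqt
                      \<Longrightarrow> (G1 @ [T'] @ G2, S, u, u') \<in> Ceqt"
    and retype: "\<And>G S S' u u'. (G, S, S') \<in> Ceq \<Longrightarrow> (G, S, u, u') \<in> Ceqt \<Longrightarrow> (G, S', u, u') \<in> Ceqt"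
    and "(G, S, u, u') \<in> Ceqt" and "ctx_sim C Ceq (G @ [S]) (G' @ [S'])"
  shows "(G', S', u, u') \<in> Ceqt"
proof -
  note sim = ctx_sim_snocD[OF assms(4)]
  have "(G, S', u, u') \<in> Ceqt" using retype[OF sim(2) assms(3)] .
  then show ?thesis
    using ctx_sim_transport[OF sim(1), of "\<lambda>G x. (G, x) \<in> Ceqt" "[]" "(S', u, u')"] replace
    by auto
qed

theorem lemma6p3:
  fixes LM :: "nat \<Rightarrow> 'l set" and R :: "nat \<Rightarrow> 'r set"
    and C :: "'l list set"
    and Ct :: "('l list \<times> 'l \<times> 'r) set"
    and Ceq :: "('l list \<times> 'l \<times> 'l) set"
    and Ceqt :: "('l list \<times> 'l \<times> 'r \<times> 'r) set"
  assumes C_typed: "\<forall>G\<in>C. well_typed LM G"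
    and Ct_typed: "\<forall>(G, T, t)\<in>Ct. well_typed LM (G @ [T]) \<and> t \<in> R (length G)"
    and Ceq_typed: "\<forall>(G, S, S')\<in>Ceq. well_typed LM G \<and> S \<in> LM (length G) \<and> S' \<in> LM (length G)"
    and Ceqt_typed: "\<forall>(G, S, u, u')\<in>Ceqt. well_typed LM (G @ [S]) \<and> u \<in> R (length G) \<and> u' \<in> R (length G)"
  shows
   "((\<forall>G T. G @ [T] \<in> C \<longrightarrow> G \<in> C) \<and>
     (\<forall>G1 T T' G2 S S'. (G1, T, T') \<in> Ceq \<and> (G1 @ [T] @ G2, S, S') \<in> Ceq
          \<longrightarrow> (G1 @ [T'] @ G2, S, S') \<in> Ceq)
     \<longrightarrow> (\<forall>G G' S S'. (G, S, S') \<in> Ceq \<and> ctx_sim C Ceq G G' \<longrightarrow> (G', S, S') \<in> Ceq))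
    \<and>
    ((\<forall>G T. G @ [T] \<in> C \<longrightarrow> G \<in> C) \<and>
     (\<forall>G1 T T' G2 S S'. (G1, T, T') \<in> Ceq \<and> (G1 @ [T] @ G2, S, S') \<in> Ceq
          \<longrightarrow> (G1 @ [T'] @ G2, S, S') \<in> Ceq) \<and>
     (\<forall>G Rt r. (G, Rt, r) \<in> Ct \<longrightarrow> G @ [Rt] \<in> C) \<and>
     (\<forall>G1 T T' G2 S u u'. (G1, T, T') \<in> Ceq \<and> (G1 @ [T] @ G2, S, u, u') \<in> Ceqt
          \<longrightarrow> (G1 @ [T'] @ G2, S, u, u') \<in> Ceqt) \<and>
     (\<forall>G S S' u u'. (G, S, S') \<in> Ceq \<and> (G, S, u, u') \<in> Ceqt \<longrightarrow> (G, S', u, u') \<in> Ceqt)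
     \<longrightarrow> (\<forall>G G' S S' u u'. (G, S, u, u') \<in> Ceqt \<and> ctx_sim C Ceq (G @ [S]) (G' @ [S'])
          \<longrightarrow> (G', S', u, u') \<in> Ceqt))"
proof (intro conjI impI allI; elim conjE)
  fix G G' S S'
  assume replace: "\<forall>G1 T T' G2 S S'. (G1, T, T') \<in> Ceq \<and> (G1 @ [T] @ G2, S, S') \<in> Ceq
            \<longrightarrow> (G1 @ [T'] @ G2, S, S') \<in> Ceq"
    and eq: "(G, S, S') \<in> Ceq" and sim: "ctx_sim C Ceq G G'"
  show "(G', S, S') \<in> Ceq"
    using replace by (intro type_eq_ctx_sim[OF _ eq sim]) blast
next
  fix G G' S S' u u'
  assume replace: "\<forall>G1 T T' G2 S u u'. (G1, T, T') \<in> Ceq \<and> (G1 @ [T] @ G2, S, u, u') \<in> Ceqt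
            \<longrightarrow> (G1 @ [T'] @ G2, S, u, u') \<in> Ceqt"
    and retype: "\<forall>G S S' u u'. (G, S, S') \<in> Ceq \<and> (G, S, u, u') \<in> Ceqt \<longrightarrow> (G, S', u, u') \<in> Ceqt"
    and eq: "(G, S, u, u') \<in> Ceqt" and sim: "ctx_sim C Ceq (G @ [S]) (G' @ [S'])"
  show "(G', S', u, u') \<in> Ceqt"
    using replace retype by (intro term_eq_ctx_sim[OF _ _ eq sim]) blast+
qed

end
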